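(* Consider a collaborative learning problem with $k$ agents, strategy space $\Theta\subseteq\mathbb{R}_+^k$, utilities $u_i$ and thresholds $\mu_i$, and for each $i$ let $\vartheta_i\ge0$ satisfy $u_i(\vartheta_i,\mathbf{0}_{-i})\ge\mu_i$. Define the best-response map $\mathbf{f}:\prod_{i=1}^k[0,\vartheta_i]\to\prod_{i=1}^k[0,\vartheta_i]$ by $\mathbf{f}({\boldsymbol\theta})=(f_i({\boldsymbol\theta}))_{i\in[k]}$, where $f_i({\boldsymbol\theta})$ is the smallest $x\ge0$ with $u_i(x,{\boldsymbol\theta}_{-i})\ge\mu_i$. If the utilities are well-behaved over $\prod_{i=1}^k[0,\vartheta_i]\subseteq\Theta$, then $\mathbf{f}$ has a fixed point, i.e. there is ${\boldsymbol\theta}\in\prod_{i=1}^k[0,\vartheta_i]$ with $\mathbf{f}({\boldsymbol\theta})={\boldsymbol\theta}$.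
   Context: Standing assumption: each $u_i$ is non-decreasing in every coordinate. $(x,{\boldsymbol\theta}_{-i})$ denotes ${\boldsymbol\theta}$ with $i$-th entry replaced by $x$. Utilities are well-behaved over $\prod_{i=1}^k[0,C_i]\subseteq\Theta$ if for each agent $i$ there are constants $c_1^i\ge0$, $c_2^i>0$ such that for all ${\boldsymbol\theta}$ in this box: $\partial u_i({\boldsymbol\theta})/\partial\theta_i\ge c_2^i$, and for all $j\ne i$, $0\le\partial u_i({\boldsymbol\theta})/\partial\theta_j\le c_1^i$. *)

theory Defs
  imports "HOL-Analysis.Analysis"
begin

text \<open>(x, theta_{-i}): theta with i-th entry replaced by x.\<close>
definition repl :: "real^'k \<Rightarrow> 'k \<Rightarrow> real \<Rightarrow> real^'k" where
  "repl \<theta> i x = (\<chi> j. if j = i then x else \<theta> $ j)"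

definition prodbox :: "('k::finite \<Rightarrow> real) \<Rightarrow> (real^'k) set" where
  "prodbox C = {\<theta>. \<forall>j. 0 \<le> \<theta> $ j \<and> \<theta> $ j \<le> C j}"

definition coord_mono :: "(real^'k) set \<Rightarrow> (real^'k \<Rightarrow> real) \<Rightarrow> bool" where
  "coord_mono \<Theta> v = (\<forall>\<theta> j x y. repl \<theta> j x \<in> \<Theta> \<and> repl \<theta> j y \<in> \<Theta> \<and> x \<le> y
       \<longrightarrow> v (repl \<theta> j x) \<le> v (repl \<theta> j y))"

text \<open>Well-behaved utilities over the box prod_i [0,C_i]; partial derivatives are taken
  along coordinate j within the interval [0, C_j] (one-sided at the box boundary).\<close>
definition well_behaved :: "('k::finite \<Rightarrow> real^'k \<Rightarrow> real) \<Rightarrow> ('k \<Rightarrow> real) \<Rightarrow> bool" where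
  "well_behaved u C = (\<forall>i. \<exists>c1 c2. c1 \<ge> 0 \<and> c2 > 0 \<and>
     (\<forall>\<theta>\<in>prodbox C. \<forall>j. \<exists>D.
        ((\<lambda>t. u i (repl \<theta> j t)) has_real_derivative D) (at (\<theta> $ j) within {0..C j}) \<and>
        (j = i \<longrightarrow> D \<ge> c2) \<and> (j \<noteq> i \<longrightarrow> 0 \<le> D \<and> D \<le> c1)))"

definition best_response :: "('k \<Rightarrow> real^'k \<Rightarrow> real) \<Rightarrow> ('k \<Rightarrow> real) \<Rightarrow> 'k \<Rightarrow> real^'k \<Rightarrow> real" where
  "best_response u \<mu> i \<theta> = (LEAST x::real. 0 \<le> x \<and> \<mu> i \<le> u i (repl \<theta> i x))"

end

theory Submission
  imports Defs
begin

text \<open>Each best response is Lipschitz on the box: raising agent i's own coordinate by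
  \<open>\<delta>\<close> gains at least \<open>c\<^sub>2 \<delta>\<close> in utility, while moving the other coordinates by a total of
  \<open>d\<close> loses at most \<open>c\<^sub>1 d\<close>, so the least coordinate reaching the threshold moves by at most
  \<open>(c\<^sub>1/c\<^sub>2) d\<close>. Starting from \<open>\<vartheta>\<^sub>i\<close> at \<open>\<theta>\<^sub>-\<^sub>i = 0\<close>, the same estimate keeps every best response
  in \<open>[0, \<vartheta>\<^sub>i]\<close>, so the best-response map is a continuous self-map of a compact box and
  Brouwer's theorem gives a fixed point.\<close>

lemma increment_ge_of_derivative_ge:
  fixes h :: "real \<Rightarrow> real"
  assumes der: "\<And>t. t \<in> {a..b} \<Longrightarrow> \<exists>D. (h has_real_derivative D) (at t within {a..b}) \<and> lo \<le> D"
    and "a \<le> s" "s \<le> t" "t \<le> b"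
  shows "lo * (t - s) \<le> h t - h s"
proof -
  have cont: "continuous_on {a..b} h"
    unfolding continuous_on_eq_continuous_within using der DERIV_continuous by blast
  have "(\<lambda>x. h x - lo * x) s \<le> (\<lambda>x. h x - lo * x) t"
  proof (rule DERIV_nonneg_imp_increasing_open[OF \<open>s \<le> t\<close>])
    fix x assume "s < x" "x < t"
    then have x: "a < x" "x < b" using assms by auto
    obtain D where D: "(h has_real_derivative D) (at x within {a..b})" "lo \<le> D"
      using der[of x] x by auto
    have "(h has_real_derivative D) (at x)" using D(1) at_within_Icc_at[OF x] by simp
    then have "((\<lambda>x. h x - lo * x) has_real_derivative D - lo) (at x)"
      by (auto intro!: derivative_eq_intros)
    then show "\<exists>y. DERIV (\<lambda>x. h x - lo * x) x :> y \<and> 0 \<le> y" using D(2) by auto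
  next
    show "continuous_on {s..t} (\<lambda>x. h x - lo * x)"
      by (intro continuous_intros continuous_on_subset[OF cont]) (use assms in auto)
  qed
  then show ?thesis by (simp add: algebra_simps)
qed

lemma increment_le_of_derivative_le:
  fixes h :: "real \<Rightarrow> real"
  assumes der: "\<And>t. t \<in> {a..b} \<Longrightarrow> \<exists>D. (h has_real_derivative D) (at t within {a..b}) \<and> D \<le> hi"
    and "a \<le> s" "s \<le> t" "t \<le> b"
  shows "h t - h s \<le> hi * (t - s)"
proof -
  have "(- hi) * (t - s) \<le> (- h t) - (- h s)"
  proof (rule increment_ge_of_derivative_ge[where a = a and b = b and h = "\<lambda>x. - h x"])
    fix t assume "t \<in> {a..b}"
    then obtain D where "(h has_real_derivative D) (at t within {a..b})" "D \<le> hi"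
      using der by blast
    then show "\<exists>D. ((\<lambda>x. - h x) has_real_derivative D) (at t within {a..b}) \<and> - hi \<le> D"
      by (intro exI[of _ "- D"]) (auto intro!: derivative_eq_intros)
  qed (use assms in auto)
  then show ?thesis by (simp add: algebra_simps)
qed

lemma sum_abs_components_le_card_dist:
  fixes x y :: "real^'n"
  shows "(\<Sum>j\<in>UNIV. \<bar>x $ j - y $ j\<bar>) \<le> real CARD('n) * dist x y"
proof -
  have "(\<Sum>j\<in>UNIV. \<bar>x $ j - y $ j\<bar>) \<le> (\<Sum>j\<in>(UNIV::'n set). dist x y)"
    by (intro sum_mono) (metis component_le_norm_cart dist_norm vector_minus_component)
  then show ?thesis by simp
qed

lemma repl_nth [simp]: "repl p i x $ j = (if j = i then x else p $ j)"
  by (simp add: repl_def)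

lemma repl_repl [simp]: "repl (repl p i t) i s = repl p i s"
  by (simp add: vec_eq_iff)

lemma repl_nth_self [simp]: "repl p i (p $ i) = p"
  by (simp add: vec_eq_iff)

lemma repl_in_prodbox: "p \<in> prodbox C \<Longrightarrow> t \<in> {0..C j} \<Longrightarrow> repl p j t \<in> prodbox C"
  by (auto simp: prodbox_def)

lemma nth_in_prodbox: "p \<in> prodbox C \<Longrightarrow> p $ j \<in> {0..C j}"
  by (auto simp: prodbox_def)

lemma zero_in_prodbox: "(\<And>j. 0 \<le> C j) \<Longrightarrow> 0 \<in> prodbox C"
  by (simp add: prodbox_def)

lemma prodbox_eq_cbox: "prodbox C = cbox 0 (\<chi> j. C j)"
  by (auto simp: prodbox_def mem_box_cart)

locale well_behaved_agent =
  fixes v :: "real^'k::finite \<Rightarrow> real" and C :: "'k \<Rightarrow> real" and i :: 'k and c1 c2 :: real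
  assumes c1_nonneg: "0 \<le> c1" and c2_pos: "0 < c2"
    and partial_derivative: "\<And>\<theta> j. \<theta> \<in> prodbox C \<Longrightarrow> \<exists>D.
      ((\<lambda>t. v (repl \<theta> j t)) has_real_derivative D) (at (\<theta> $ j) within {0..C j}) \<and>
      (j = i \<longrightarrow> c2 \<le> D) \<and> (j \<noteq> i \<longrightarrow> 0 \<le> D \<and> D \<le> c1)"
begin

lemma partial_derivative_along_line:
  assumes "p \<in> prodbox C" "t \<in> {0..C j}"
  shows "\<exists>D. ((\<lambda>s. v (repl p j s)) has_real_derivative D) (at t within {0..C j}) \<and>
    (j = i \<longrightarrow> c2 \<le> D) \<and> (j \<noteq> i \<longrightarrow> 0 \<le> D \<and> D \<le> c1)"
  using partial_derivative[OF repl_in_prodbox[OF assms], of j] assms(2) by simp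

lemma own_coordinate_gain:
  assumes p: "p \<in> prodbox C" and "0 \<le> x" "x \<le> y" "y \<le> C i"
  shows "v (repl p i x) + c2 * (y - x) \<le> v (repl p i y)"
proof -
  have "\<exists>D. ((\<lambda>s. v (repl p i s)) has_real_derivative D) (at s within {0..C i}) \<and> c2 \<le> D"
    if "s \<in> {0..C i}" for s
    using partial_derivative_along_line[OF p that] by blast
  from increment_ge_of_derivative_ge[OF this assms(2-4)] show ?thesis by simp
qed

lemma other_coordinate_loss:
  assumes p: "p \<in> prodbox C" and "a \<noteq> i" and t: "0 \<le> t" "t \<le> C a"
  shows "v p - c1 * max 0 (p $ a - t) \<le> v (repl p a t)"
proof -
  let ?h = "\<lambda>s. v (repl p a s)"
  have der: "\<exists>D. (?h has_real_derivative D) (at s within {0..C a}) \<and> 0 \<le> D \<and> D \<le> c1"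
    if "s \<in> {0..C a}" for s
    using partial_derivative_along_line[OF p that] \<open>a \<noteq> i\<close> by blast
  have pa: "0 \<le> p $ a" "p $ a \<le> C a" using nth_in_prodbox[OF p] by auto
  show ?thesis
  proof (cases "p $ a \<le> t")
    case True
    have "0 * (t - p $ a) \<le> ?h t - ?h (p $ a)"
      by (rule increment_ge_of_derivative_ge[OF _ pa(1) True t(2)]) (use der in blast)
    then show ?thesis using True by simp
  next
    case False
    have "?h (p $ a) - ?h t \<le> c1 * (p $ a - t)"
      by (rule increment_le_of_derivative_le[OF _ t(1) _ pa(2)]) (use der False in auto)
    then show ?thesis using False by simp
  qed
qed

lemma other_coordinates_loss:
  assumes th: "\<theta> \<in> prodbox C" "\<theta>' \<in> prodbox C" and y: "y \<in> {0..C i}"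
  shows "v (repl \<theta> i y) - c1 * (\<Sum>j\<in>UNIV. max 0 (\<theta> $ j - \<theta>' $ j)) \<le> v (repl \<theta>' i y)"
proof -
  \<comment> \<open>walk from \<open>\<theta>\<close> to \<open>\<theta>'\<close> one coordinate at a time;
    \<open>m S\<close> has the coordinates in \<open>S\<close> moved\<close>
  define m where "m S = (\<chi> j. if j = i then y else if j \<in> S then \<theta>' $ j else \<theta> $ j)" for S
  have m_in: "m S \<in> prodbox C" for S
    using th y by (auto simp: prodbox_def m_def)
  have walk: "v (repl \<theta> i y) - c1 * (\<Sum>j\<in>S. max 0 (\<theta> $ j - \<theta>' $ j)) \<le> v (m S)"
    if "finite S" for S
    using that
  proof (induction S rule: finite_induct)
    case empty
    have "m {} = repl \<theta> i y" by (simp add: m_def vec_eq_iff)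
    then show ?case by simp
  next
    case (insert a S)
    show ?case
    proof (cases "a = i")
      case True
      then have "m (insert a S) = m S" by (simp add: m_def vec_eq_iff)
      moreover have "0 \<le> c1 * max 0 (\<theta> $ a - \<theta>' $ a)" using c1_nonneg by simp
      ultimately show ?thesis using insert by (simp add: algebra_simps)
    next
      case False
      have "m (insert a S) = repl (m S) a (\<theta>' $ a)" "m S $ a = \<theta> $ a"
        using False insert(2) by (auto simp: m_def vec_eq_iff)
      then show ?thesis
        using other_coordinate_loss[OF m_in[of S] False, of "\<theta>' $ a"] nth_in_prodbox[OF th(2), of a] insert
        by (simp add: algebra_simps)
    qed
  qed
  have "m UNIV = repl \<theta>' i y" by (simp add: m_def vec_eq_iff)
  with walk[OF finite_class.finite_UNIV] show ?thesis by simp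
qed

end

locale threshold_agent = well_behaved_agent v C i c1 c2
  for v :: "real^'k::finite \<Rightarrow> real" and C i c1 c2 +
  fixes \<mu> :: real
  assumes C_nonneg: "\<And>j. 0 \<le> C j"
    and threshold_at_cap: "\<mu> \<le> v (repl 0 i (C i))"
begin

definition response :: "real^'k \<Rightarrow> real" where
  "response \<theta> = (LEAST x. 0 \<le> x \<and> \<mu> \<le> v (repl \<theta> i x))"

lemma threshold_reached_at_cap:
  assumes "\<theta> \<in> prodbox C"
  shows "\<mu> \<le> v (repl \<theta> i (C i))"
proof -
  have "(\<Sum>j\<in>UNIV. max 0 ((0::real^'k) $ j - \<theta> $ j)) = 0"
    using assms by (intro sum.neutral) (auto simp: prodbox_def)
  then show ?thesis
    using other_coordinates_loss[OF zero_in_prodbox[of C, OF C_nonneg] assms, of "C i"]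
      threshold_at_cap C_nonneg[of i] by simp
qed

lemma response_least:
  assumes th: "\<theta> \<in> prodbox C"
  shows "response \<theta> \<in> {0..C i}" "\<mu> \<le> v (repl \<theta> i (response \<theta>))"
    and "\<And>x. 0 \<le> x \<Longrightarrow> \<mu> \<le> v (repl \<theta> i x) \<Longrightarrow> response \<theta> \<le> x"
proof -
  let ?g = "\<lambda>x. v (repl \<theta> i x)"
  define S where "S = {0..C i} \<inter> ?g -` {\<mu>..}"
  have S_iff: "x \<in> S \<longleftrightarrow> 0 \<le> x \<and> x \<le> C i \<and> \<mu> \<le> ?g x" for x
    by (simp add: S_def)
  have "continuous_on {0..C i} ?g"
    unfolding continuous_on_eq_continuous_within
    using partial_derivative_along_line[OF th, of _ i] DERIV_continuous by blast
  then have "closed S" unfolding S_def by (rule continuous_closed_preimage) auto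
  moreover have "C i \<in> S" using threshold_reached_at_cap[OF th] C_nonneg[of i] by (simp add: S_iff)
  moreover have bdd: "bdd_below S" by (rule bdd_belowI[of _ 0]) (simp add: S_iff)
  ultimately have "Inf S \<in> S" using closed_contains_Inf by blast
  then have inf: "0 \<le> Inf S" "Inf S \<le> C i" "\<mu> \<le> ?g (Inf S)" by (simp_all add: S_iff)
  have inf_le: "Inf S \<le> x" if "0 \<le> x" "\<mu> \<le> ?g x" for x
  proof (cases "x \<le> C i")
    case True
    with that have "x \<in> S" by (simp add: S_iff)
    then show ?thesis by (rule cInf_lower[OF _ bdd])
  qed (use inf in linarith)
  have "response \<theta> = Inf S"
    unfolding response_def by (rule Least_equality) (use inf inf_le in auto)
  then show "response \<theta> \<in> {0..C i}" "\<mu> \<le> ?g (response \<theta>)"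
    "\<And>x. 0 \<le> x \<Longrightarrow> \<mu> \<le> ?g x \<Longrightarrow> response \<theta> \<le> x"
    using inf inf_le by auto
qed

lemma response_le_shift:
  assumes th: "\<theta> \<in> prodbox C" "\<theta>' \<in> prodbox C"
  shows "response \<theta>' \<le> response \<theta> + c1 / c2 * (\<Sum>j\<in>UNIV. \<bar>\<theta> $ j - \<theta>' $ j\<bar>)"
proof -
  define x where "x = response \<theta>"
  define d where "d = (\<Sum>j\<in>UNIV. \<bar>\<theta> $ j - \<theta>' $ j\<bar>)"
  have x: "0 \<le> x" "x \<le> C i" "\<mu> \<le> v (repl \<theta> i x)"
    using response_least[OF th(1)] by (auto simp: x_def)
  have shift_nonneg: "0 \<le> c1 / c2 * d"
    using c1_nonneg c2_pos by (simp add: d_def sum_nonneg)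
  define y where "y = min (C i) (x + c1 / c2 * d)"
  have y: "0 \<le> y" "y \<le> C i" using x shift_nonneg C_nonneg[of i] by (auto simp: y_def)
  have "\<mu> \<le> v (repl \<theta>' i y)"
  proof (cases "y = C i")
    case True
    then show ?thesis using threshold_reached_at_cap[OF th(2)] by simp
  next
    case False
    then have y_eq: "y = x + c1 / c2 * d" by (auto simp: y_def)
    have "(\<Sum>j\<in>UNIV. max 0 (\<theta> $ j - \<theta>' $ j)) \<le> d"
      unfolding d_def by (intro sum_mono) auto
    then have "c1 * (\<Sum>j\<in>UNIV. max 0 (\<theta> $ j - \<theta>' $ j)) \<le> c1 * d"
      by (rule mult_left_mono[OF _ c1_nonneg])
    then have "v (repl \<theta> i y) - c1 * d \<le> v (repl \<theta>' i y)"
      using other_coordinates_loss[OF th, of y] y by auto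
    moreover have "v (repl \<theta> i x) + c2 * (y - x) \<le> v (repl \<theta> i y)"
      using own_coordinate_gain[OF th(1) x(1) _ y(2)] y_eq shift_nonneg by simp
    moreover have "c2 * (y - x) = c1 * d" using y_eq c2_pos by simp
    ultimately show ?thesis using x(3) by linarith
  qed
  then have "response \<theta>' \<le> y" using response_least(3)[OF th(2)] y by blast
  then show ?thesis unfolding x_def d_def y_def by simp
qed

lemma response_lipschitz: "(c1 / c2 * real CARD('k))-lipschitz_on (prodbox C) response"
proof (rule lipschitz_onI)
  fix \<theta> \<theta>' assume th: "\<theta> \<in> prodbox C" "\<theta>' \<in> prodbox C"
  have K: "0 \<le> c1 / c2" using c1_nonneg c2_pos by simp
  have "c1 / c2 * (\<Sum>j\<in>UNIV. \<bar>\<theta> $ j - \<theta>' $ j\<bar>) \<le> c1 / c2 * real CARD('k) * dist \<theta> \<theta>'"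
    using mult_left_mono[OF sum_abs_components_le_card_dist K] by (simp add: mult.assoc)
  moreover have "c1 / c2 * (\<Sum>j\<in>UNIV. \<bar>\<theta>' $ j - \<theta> $ j\<bar>) \<le> c1 / c2 * real CARD('k) * dist \<theta> \<theta>'"
    using mult_left_mono[OF sum_abs_components_le_card_dist[of \<theta>' \<theta>] K]
    by (simp add: mult.assoc dist_commute)
  ultimately show "dist (response \<theta>) (response \<theta>') \<le> c1 / c2 * real CARD('k) * dist \<theta> \<theta>'"
    using response_le_shift[OF th] response_le_shift[OF th(2,1)] unfolding dist_real_def by linarith
qed (use c1_nonneg c2_pos in simp)

end

lemma best_response_continuous_in_box:
  fixes u :: "'k::finite \<Rightarrow> real^'k \<Rightarrow> real"
  assumes "\<And>j. 0 \<le> C j" "\<mu> i \<le> u i (repl 0 i (C i))" "well_behaved u C"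
  shows "continuous_on (prodbox C) (best_response u \<mu> i)"
    and "\<And>\<theta>. \<theta> \<in> prodbox C \<Longrightarrow> best_response u \<mu> i \<theta> \<in> {0..C i}"
proof -
  obtain c1 c2 where "0 \<le> c1" "0 < c2" and "\<forall>\<theta>\<in>prodbox C. \<forall>j. \<exists>D.
      ((\<lambda>t. u i (repl \<theta> j t)) has_real_derivative D) (at (\<theta> $ j) within {0..C j}) \<and>
      (j = i \<longrightarrow> D \<ge> c2) \<and> (j \<noteq> i \<longrightarrow> 0 \<le> D \<and> D \<le> c1)"
    using assms(3) unfolding well_behaved_def by (elim allE[of _ i] exE conjE)
  then interpret threshold_agent "u i" C i c1 c2 "\<mu> i"
    by unfold_locales (use assms(1,2) in auto)
  have "best_response u \<mu> i = response"
    by (simp add: fun_eq_iff best_response_def response_def)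
  then show "continuous_on (prodbox C) (best_response u \<mu> i)"
    "\<And>\<theta>. \<theta> \<in> prodbox C \<Longrightarrow> best_response u \<mu> i \<theta> \<in> {0..C i}"
    using lipschitz_on_continuous_on[OF response_lipschitz] response_least(1) by auto
qed

theorem lemma1:
  fixes \<Theta> :: "(real^'k::finite) set"
    and u :: "'k \<Rightarrow> real^'k \<Rightarrow> real"
    and \<mu> :: "'k \<Rightarrow> real"
    and vt :: "'k \<Rightarrow> real"
  assumes strat: "\<Theta> \<subseteq> {\<theta>. \<forall>j. 0 \<le> \<theta> $ j}"
    and mono: "\<And>i. coord_mono \<Theta> (u i)"
    and vt_nonneg: "\<And>i. 0 \<le> vt i"
    and vt_ok: "\<And>i. \<mu> i \<le> u i (repl 0 i (vt i))"
    and box_sub: "prodbox vt \<subseteq> \<Theta>"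
    and wb: "well_behaved u vt"
  shows "\<exists>\<theta>\<in>prodbox vt. (\<chi> i. best_response u \<mu> i \<theta>) = \<theta>"
proof -
  have br: "continuous_on (prodbox vt) (best_response u \<mu> i)"
    "\<theta> \<in> prodbox vt \<Longrightarrow> best_response u \<mu> i \<theta> \<in> {0..vt i}" for i \<theta>
    using best_response_continuous_in_box[where u = u and \<mu> = \<mu> and i = i, OF vt_nonneg vt_ok wb]
    by auto
  have "compact (prodbox vt)" "convex (prodbox vt)"
    unfolding prodbox_eq_cbox by (simp_all add: compact_cbox convex_box)
  moreover have "prodbox vt \<noteq> {}" using zero_in_prodbox[of vt, OF vt_nonneg] by blast
  moreover have "continuous_on (prodbox vt) (\<lambda>\<theta>. \<chi> i. best_response u \<mu> i \<theta>)"
    by (rule continuous_on_vec_lambda) (simp add: br(1))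
  moreover have "(\<lambda>\<theta>. \<chi> i. best_response u \<mu> i \<theta>) \<in> prodbox vt \<rightarrow> prodbox vt"
    using br(2) by (auto simp: prodbox_def)
  ultimately obtain \<theta> where "\<theta> \<in> prodbox vt" "(\<chi> i. best_response u \<mu> i \<theta>) = \<theta>"
    by (rule brouwer)
  then show ?thesis by blast
qed

end
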